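(* Let $(\mathfrak{Q},\&,e)$ be a non-trivial unital quantale and let $\alpha$ be a $\mathfrak{Q}$-preorder on a $\mathfrak{Q}$-subset $(X,|\cdot|)$. (1) If $|\cdot|'\colon X\to\mathfrak{Q}$ is another map with $|x|\le|x|'\le\alpha(x,x)$ for all $x\in X$, then $\alpha$ is also a $\mathfrak{Q}$-preorder on the $\mathfrak{Q}$-subset $(X,|\cdot|')$. (2) If $\mathfrak{Q}$ is integral, then $\alpha(x,x)=|x|$ for every $x\in X$.
   Context: A unital quantale $(\mathfrak{Q},\&,e)$ is a complete lattice with an associative multiplication $\&$ with unit $e$, preserving arbitrary joins in each variable; non-trivial means $\bot<e$; integral means $e=\top$. Implications: $p\& q\le r\iff p\le r/ q\iff q\le p\backslash r$. A $\mathfrak{Q}$-subset is a set $X$ with a map $|\cdot|\colon X\to\mathfrak{Q}$. A $\mathfrak{Q}$-preorder on $(X,|\cdot|)$ is a map $\alpha\colon X\times X\to\mathfrak{Q}$ such that for all $x,y,z\in X$: (divisibility) $(\alpha(x,y)/|x|)\&|x|=\alpha(x,y)=|y|\&(|y|\backslash\alpha(x,y))$; (reflexivity) $|x|\le\alpha(x,x)$; (transitivity) $(\alpha(y,z)/|y|)\&\alpha(x,y)=\alpha(y,z)\&(|y|\backslash\alpha(x,y))\le\alpha(x,z)$. *)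

theory Defs
  imports Main
begin

locale unital_quantale =
  fixes mult :: "'q::complete_lattice \<Rightarrow> 'q \<Rightarrow> 'q" (infixl "&&" 70)
    and e :: "'q"
  assumes mult_assoc: "(p && q) && r = p && (q && r)"
    and unit_left: "e && p = p"
    and unit_right: "p && e = p"
    and Sup_distrib_left: "p && Sup A = Sup ((\<lambda>a. p && a) ` A)"
    and Sup_distrib_right: "Sup A && p = Sup ((\<lambda>a. a && p) ` A)"
begin

definition rimp :: "'q \<Rightarrow> 'q \<Rightarrow> 'q" (infixl "'/'/" 65) where
  "r // q = Sup {p. p && q \<le> r}"

definition limp :: "'q \<Rightarrow> 'q \<Rightarrow> 'q" (infixr "\<setminus>\<setminus>" 65) where
  "p \<setminus>\<setminus> r = Sup {q. p && q \<le> r}"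

definition nontrivial :: bool where
  "nontrivial \<longleftrightarrow> bot < e"

definition integral :: bool where
  "integral \<longleftrightarrow> e = top"

definition Q_preorder :: "'a set \<Rightarrow> ('a \<Rightarrow> 'q) \<Rightarrow> ('a \<Rightarrow> 'a \<Rightarrow> 'q) \<Rightarrow> bool" where
  "Q_preorder X nm \<alpha> \<longleftrightarrow>
     (\<forall>x\<in>X. \<forall>y\<in>X. (\<alpha> x y // nm x) && nm x = \<alpha> x y
                   \<and> \<alpha> x y = nm y && (nm y \<setminus>\<setminus> \<alpha> x y))
   \<and> (\<forall>x\<in>X. nm x \<le> \<alpha> x x)
   \<and> (\<forall>x\<in>X. \<forall>y\<in>X. \<forall>z\<in>X.
        (\<alpha> y z // nm y) && \<alpha> x y = \<alpha> y z && (nm y \<setminus>\<setminus> \<alpha> x y)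
      \<and> (\<alpha> y z // nm y) && \<alpha> x y \<le> \<alpha> x z)"

end

end

theory Submission
  imports Defs
begin

text \<open>Enlarging the norm from \<open>|x|\<close> to \<open>|x|'\<close> with \<open>|x|' \<le> \<alpha>(x,x)\<close> leaves all residuals
  that occur in the axioms unchanged in effect: transitivity through the loop \<open>\<alpha>(x,x)\<close> gives
  \<open>(\<alpha>(x,y) / |x|) & |x|' \<le> \<alpha>(x,y)\<close>, so \<open>\<alpha>(x,y) / |x| \<le> \<alpha>(x,y) / |x|'\<close>, and squeezing
  \<open>\<alpha>(x,y) = (\<alpha>(x,y) / |x|) & |x| \<le> (\<alpha>(x,y) / |x|') & |x|' \<le> \<alpha>(x,y)\<close> restores divisibility;
  symmetrically on the left. In an integral quantale \<open>p & q \<le> e & q = q\<close>, so divisibility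
  bounds \<open>\<alpha>(x,x)\<close> by \<open>|x|\<close>.\<close>

context unital_quantale
begin

lemma mult_right_mono: "a \<le> b \<Longrightarrow> a && c \<le> b && c"
  using Sup_distrib_right[of "{a, b}" c] by (simp add: sup.absorb2 le_iff_sup)

lemma mult_left_mono: "a \<le> b \<Longrightarrow> c && a \<le> c && b"
  using Sup_distrib_left[of c "{a, b}"] by (simp add: sup.absorb2 le_iff_sup)

lemma le_rimp_iff: "p \<le> r // q \<longleftrightarrow> p && q \<le> r"
proof
  have "(r // q) && q = Sup ((\<lambda>a. a && q) ` {p. p && q \<le> r})"
    unfolding rimp_def by (rule Sup_distrib_right)
  also have "\<dots> \<le> r" by (auto intro: Sup_least)
  finally show "p && q \<le> r" if "p \<le> r // q"
    by (rule order_trans[OF mult_right_mono[OF that]])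
qed (auto simp: rimp_def intro: Sup_upper)

lemma le_limp_iff: "q \<le> p \<setminus>\<setminus> r \<longleftrightarrow> p && q \<le> r"
proof
  have "p && (p \<setminus>\<setminus> r) = Sup ((\<lambda>a. p && a) ` {q. p && q \<le> r})"
    unfolding limp_def by (rule Sup_distrib_left)
  also have "\<dots> \<le> r" by (auto intro: Sup_least)
  finally show "p && q \<le> r" if "q \<le> p \<setminus>\<setminus> r"
    by (rule order_trans[OF mult_left_mono[OF that]])
qed (auto simp: limp_def intro: Sup_upper)

lemma rimp_mult_le: "(r // q) && q \<le> r"
  using le_rimp_iff by blast

lemma mult_limp_le: "p && (p \<setminus>\<setminus> r) \<le> r"
  using le_limp_iff by blast

lemma rimp_divisible_larger:
  assumes div: "(a // n) && n = a" and "n \<le> n'" and bound: "(a // n) && n' \<le> a"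
  shows "(a // n') && n = a" and "(a // n') && n' = a"
proof -
  have "a // n \<le> a // n'" using bound by (simp add: le_rimp_iff)
  then have "a \<le> (a // n') && n" using div mult_right_mono by metis
  moreover have "(a // n') && n \<le> (a // n') && n'" using \<open>n \<le> n'\<close> by (rule mult_left_mono)
  ultimately show "(a // n') && n = a" "(a // n') && n' = a"
    using rimp_mult_le[of a n'] by (auto intro: antisym)
qed

lemma limp_divisible_larger:
  assumes div: "n && (n \<setminus>\<setminus> a) = a" and "n \<le> n'" and bound: "n' && (n \<setminus>\<setminus> a) \<le> a"
  shows "n && (n' \<setminus>\<setminus> a) = a" and "n' && (n' \<setminus>\<setminus> a) = a"
proof -
  have "n \<setminus>\<setminus> a \<le> n' \<setminus>\<setminus> a" using bound by (simp add: le_limp_iff)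
  then have "a \<le> n && (n' \<setminus>\<setminus> a)" using div mult_left_mono by metis
  moreover have "n && (n' \<setminus>\<setminus> a) \<le> n' && (n' \<setminus>\<setminus> a)" using \<open>n \<le> n'\<close> by (rule mult_right_mono)
  ultimately show "n && (n' \<setminus>\<setminus> a) = a" "n' && (n' \<setminus>\<setminus> a) = a"
    using mult_limp_le[of n' a] by (auto intro: antisym)
qed

lemma Q_preorder_larger_norm:
  assumes pre: "Q_preorder X nm \<alpha>"
    and between: "\<forall>x\<in>X. nm x \<le> nm' x \<and> nm' x \<le> \<alpha> x x"
  shows "Q_preorder X nm' \<alpha>"
proof -
  have rdiv: "\<And>x y. x\<in>X \<Longrightarrow> y\<in>X \<Longrightarrow> (\<alpha> x y // nm x) && nm x = \<alpha> x y"
    and ldiv: "\<And>x y. x\<in>X \<Longrightarrow> y\<in>X \<Longrightarrow> nm y && (nm y \<setminus>\<setminus> \<alpha> x y) = \<alpha> x y"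
    and trans_eq: "\<And>x y z. x\<in>X \<Longrightarrow> y\<in>X \<Longrightarrow> z\<in>X \<Longrightarrow>
        (\<alpha> y z // nm y) && \<alpha> x y = \<alpha> y z && (nm y \<setminus>\<setminus> \<alpha> x y)"
    and trans_le: "\<And>x y z. x\<in>X \<Longrightarrow> y\<in>X \<Longrightarrow> z\<in>X \<Longrightarrow>
        (\<alpha> y z // nm y) && \<alpha> x y \<le> \<alpha> x z"
    using pre unfolding Q_preorder_def by metis+
  have larger: "\<And>x. x\<in>X \<Longrightarrow> nm x \<le> nm' x" and below_loop: "\<And>x. x\<in>X \<Longrightarrow> nm' x \<le> \<alpha> x x"
    using between by auto
  have rdiv': "(\<alpha> x y // nm' x) && nm x = \<alpha> x y" "(\<alpha> x y // nm' x) && nm' x = \<alpha> x y"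
    if "x\<in>X" "y\<in>X" for x y
  proof -
    have "(\<alpha> x y // nm x) && nm' x \<le> \<alpha> x y"
      using mult_left_mono[OF below_loop[OF \<open>x\<in>X\<close>]] trans_le[OF \<open>x\<in>X\<close> \<open>x\<in>X\<close> \<open>y\<in>X\<close>]
      by (rule order_trans)
    then show "(\<alpha> x y // nm' x) && nm x = \<alpha> x y" "(\<alpha> x y // nm' x) && nm' x = \<alpha> x y"
      using rimp_divisible_larger[OF rdiv[OF that] larger[OF \<open>x\<in>X\<close>]] by blast+
  qed
  have ldiv': "nm y && (nm' y \<setminus>\<setminus> \<alpha> x y) = \<alpha> x y" "nm' y && (nm' y \<setminus>\<setminus> \<alpha> x y) = \<alpha> x y"
    if "x\<in>X" "y\<in>X" for x y
  proof -
    have "nm' y && (nm y \<setminus>\<setminus> \<alpha> x y) \<le> \<alpha> y y && (nm y \<setminus>\<setminus> \<alpha> x y)"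
      by (rule mult_right_mono[OF below_loop[OF \<open>y\<in>X\<close>]])
    also have "\<dots> = (\<alpha> y y // nm y) && \<alpha> x y"
      using trans_eq[OF \<open>x\<in>X\<close> \<open>y\<in>X\<close> \<open>y\<in>X\<close>] by simp
    also have "\<dots> \<le> \<alpha> x y" by (rule trans_le[OF \<open>x\<in>X\<close> \<open>y\<in>X\<close> \<open>y\<in>X\<close>])
    finally show "nm y && (nm' y \<setminus>\<setminus> \<alpha> x y) = \<alpha> x y" "nm' y && (nm' y \<setminus>\<setminus> \<alpha> x y) = \<alpha> x y"
      using limp_divisible_larger[OF ldiv[OF that] larger[OF \<open>y\<in>X\<close>]] by blast+
  qed
  have trans_same: "(\<alpha> y z // nm' y) && \<alpha> x y = (\<alpha> y z // nm y) && \<alpha> x y"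
    "\<alpha> y z && (nm' y \<setminus>\<setminus> \<alpha> x y) = (\<alpha> y z // nm y) && \<alpha> x y"
    if "x\<in>X" "y\<in>X" "z\<in>X" for x y z
    using rdiv'(1)[of y z] ldiv[of x y] rdiv[of y z] ldiv'(1)[of x y] trans_eq[of x y z] that
    by (metis mult_assoc)+
  show ?thesis
    unfolding Q_preorder_def using rdiv'(2) ldiv'(2) below_loop trans_same trans_le by metis
qed

lemma integral_mult_le_right: "integral \<Longrightarrow> p && q \<le> q"
  using mult_right_mono[of p e q] unit_left by (simp add: integral_def)

lemma Q_preorder_diagonal_eq_norm:
  assumes "integral" and "Q_preorder X nm \<alpha>" and "x \<in> X"
  shows "\<alpha> x x = nm x"
proof (rule antisym)
  have "\<alpha> x x = (\<alpha> x x // nm x) && nm x" using assms(2,3) unfolding Q_preorder_def by metis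
  also have "\<dots> \<le> nm x" using \<open>integral\<close> by (rule integral_mult_le_right)
  finally show "\<alpha> x x \<le> nm x" .
  show "nm x \<le> \<alpha> x x" using assms(2,3) unfolding Q_preorder_def by metis
qed

end

theorem proposition3p3:
  fixes mult :: "'q::complete_lattice \<Rightarrow> 'q \<Rightarrow> 'q" and e :: 'q
    and X :: "'a set" and nm nm' :: "'a \<Rightarrow> 'q" and \<alpha> :: "'a \<Rightarrow> 'a \<Rightarrow> 'q"
  assumes Q: "unital_quantale mult e"
    and nt: "unital_quantale.nontrivial e"
    and pre: "unital_quantale.Q_preorder mult X nm \<alpha>"
  shows "((\<forall>x\<in>X. nm x \<le> nm' x \<and> nm' x \<le> \<alpha> x x)
            \<longrightarrow> unital_quantale.Q_preorder mult X nm' \<alpha>)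
       \<and> (unital_quantale.integral e \<longrightarrow> (\<forall>x\<in>X. \<alpha> x x = nm x))"
proof -
  interpret unital_quantale mult e by (rule Q)
  show ?thesis
    using Q_preorder_larger_norm[OF pre] Q_preorder_diagonal_eq_norm[OF _ pre] by blast
qed

end
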